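(* If the joint state space is the minimal tensor product, $\Omega_{AB}=\Omega_A\otimes_{\min}\Omega_B$, then for any set of allowed local transformations on $A$ one has $\chi_{DC}(\Omega_{AB})\le\chi_C(\Omega_A)$; i.e. superdense coding (a state $\phi$ with $\chi_{DC}(\phi)>\chi_C(\Omega_A)$) is impossible.
   Context: Single systems: $\Omega_A\subset\mathbb R^{n_A+1}$, $\Omega_B\subset\mathbb R^{n_B+1}$ are GPT state spaces of the form $\{(1,r)^{\mathrm t}: r\in\mathcal R\}$ with $\mathcal R$ compact convex, unit effects $u_A,u_B=(1,\mathbf 0)^{\mathrm t}$, effect sets $\mathcal E_A=\{e:0\le e\cdot\omega\le1\ \forall\omega\in\Omega_A\}$ (similarly $\mathcal E_B$). Bipartite states are real $(n_A+1)\times(n_B+1)$ matrices, identified with $\mathbb R^{n_A+1}\otimes\mathbb R^{n_B+1}$ via $v\otimes w=vw^{\mathrm t}$, inner product $X\cdot Y=\mathrm{Tr}(X^{\mathrm t}Y)$. $\Omega_A\otimes_{\min}\Omega_B$ is the convex hull of $\{\omega_A\otimes\omega_B:\omega_A\in\Omega_A,\omega_B\in\Omega_B\}$. Effects of a joint state space $\Omega_{AB}$: $\mathcal E_{AB}=\{E:0\le E\cdot\phi\le1\ \forall\phi\in\Omega_{AB}\}$; measurements are finite families in $\mathcal E_{AB}$ summing to $u_A\otimes u_B$. An allowed local transformation on $A$ is a linear map $T$ of $\mathbb R^{n_A+1}$ with $T\Omega_A\subseteq\Omega_A$ and $T\phi\in\Omega_{AB}$ for all $\phi\in\Omega_{AB}$.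 Classical capacity $\chi_C(\Omega_A)$: supremum of $I(X:Y)$ over finite message distributions $p_x$, states $\omega_x\in\Omega_A$ and measurements $\{e_y\}\subset\mathcal E_A$ with $p(y|x)=e_y\cdot\omega_x$. A dense coding protocol with initial state $\phi\in\Omega_{AB}$ consists of a finite message distribution $p_x$, allowed local transformations $T_x$ on $A$, and a measurement $\{E_y\}\subset\mathcal E_{AB}$, with $p(y|x)=E_y\cdot(T_x\phi)$; $\chi_{DC}(\phi)$ is the supremum of $I(X:Y)$ over such protocols and $\chi_{DC}(\Omega_{AB})=\sup_\phi\chi_{DC}(\phi)$. *)

theory Defs
  imports "HOL-Analysis.Analysis"
begin

text \<open>Single-system vectors live in real^('a::finite option): the coordinate None is the
 distinguished first coordinate (the constant 1 of states (1,r)), the coordinates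
 Some i, i :: 'a, form the R^{n} part (n = CARD('a)).  Bipartite states are
 matrices real^('b::finite option)^('a::finite option), rows indexed by system A.  The inner
 product of such matrices is the sum of entrywise products, i.e. Tr(X^t Y).\<close>

definition gpt_state_space :: "(real^'a) set \<Rightarrow> (real^('a::finite option)) set" where
  "gpt_state_space R = {v. v $ None = 1 \<and> (\<chi> i. v $ Some i) \<in> R}"

definition unit_eff :: "real^('a::finite option)" where
  "unit_eff = (\<chi> i. if i = None then 1 else 0)"

definition effects :: "('v::real_inner) set \<Rightarrow> 'v set" where
  "effects \<Omega> = {e. \<forall>\<omega>\<in>\<Omega>. 0 \<le> e \<bullet> \<omega> \<and> e \<bullet> \<omega> \<le> 1}"

definition tens :: "real^'a \<Rightarrow> real^'b \<Rightarrow> real^'b^'a" where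
  "tens v w = (\<chi> i j. v $ i * w $ j)"

definition min_tensor :: "(real^'a) set \<Rightarrow> (real^'b) set \<Rightarrow> (real^'b^'a) set" where
  "min_tensor \<Omega>A \<Omega>B = convex hull {tens a b | a b. a \<in> \<Omega>A \<and> b \<in> \<Omega>B}"

definition is_measurement :: "('v::real_inner) set \<Rightarrow> 'v \<Rightarrow> nat set \<Rightarrow> (nat \<Rightarrow> 'v) \<Rightarrow> bool" where
  "is_measurement \<Omega> u Y e \<longleftrightarrow> finite Y \<and> (\<forall>y\<in>Y. e y \<in> effects \<Omega>) \<and> sum e Y = u"

definition is_distribution :: "nat set \<Rightarrow> (nat \<Rightarrow> real) \<Rightarrow> bool" where
  "is_distribution X p \<longleftrightarrow> finite X \<and> (\<forall>x\<in>X. 0 \<le> p x) \<and> sum p X = 1"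

text \<open>Mutual information I(X:Y) (in bits) of the joint distribution p(x) q(y|x),
  with the convention 0 log 0 = 0.\<close>
definition mutual_info :: "nat set \<Rightarrow> nat set \<Rightarrow> (nat \<Rightarrow> real) \<Rightarrow> (nat \<Rightarrow> nat \<Rightarrow> real) \<Rightarrow> real" where
  "mutual_info X Y p q =
     (\<Sum>x\<in>X. \<Sum>y\<in>Y. if p x * q x y = 0 then 0
        else p x * q x y * log 2 (q x y / (\<Sum>x'\<in>X. p x' * q x' y)))"

definition classical_capacity :: "(real^('a::finite option)) set \<Rightarrow> ereal" where
  "classical_capacity \<Omega> = Sup {ereal (mutual_info X Y p (\<lambda>x y. e y \<bullet> \<omega> x)) | X Y p \<omega> e.
      is_distribution X p \<and> (\<forall>x\<in>X. \<omega> x \<in> \<Omega>) \<and> is_measurement \<Omega> unit_eff Y e}"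

text \<open>Action of a linear map T on system A of a bipartite state (T \<otimes> id).\<close>
definition loc_apply :: "(real^'a \<Rightarrow> real^'a) \<Rightarrow> real^'b^'a \<Rightarrow> real^'b^'a" where
  "loc_apply T \<phi> = (\<chi> i j. T (\<chi> k. \<phi> $ k $ j) $ i)"

definition allowed_local :: "(real^('a::finite option)) set \<Rightarrow> (real^('b::finite option)^('a::finite option)) set
     \<Rightarrow> (real^('a::finite option) \<Rightarrow> real^('a::finite option)) set" where
  "allowed_local \<Omega>A \<Omega>AB = {T. linear T \<and> T ` \<Omega>A \<subseteq> \<Omega>A \<and> (\<forall>\<phi>\<in>\<Omega>AB. loc_apply T \<phi> \<in> \<Omega>AB)}"

definition dense_coding_capacity ::
  "(real^('b::finite option)^('a::finite option)) set \<Rightarrow> (real^('a::finite option) \<Rightarrow> real^('a::finite option)) set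
     \<Rightarrow> real^('b::finite option)^('a::finite option) \<Rightarrow> ereal" where
  "dense_coding_capacity \<Omega>AB TT \<phi> = Sup {ereal (mutual_info X Y p (\<lambda>x y. E y \<bullet> loc_apply (T x) \<phi>)) | X Y p T E.
      is_distribution X p \<and> (\<forall>x\<in>X. T x \<in> TT) \<and> is_measurement \<Omega>AB (tens unit_eff unit_eff) Y E}"

definition dense_coding_capacity_space ::
  "(real^('b::finite option)^('a::finite option)) set \<Rightarrow> (real^('a::finite option) \<Rightarrow> real^('a::finite option)) set \<Rightarrow> ereal" where
  "dense_coding_capacity_space \<Omega>AB TT = (SUP \<phi>\<in>\<Omega>AB. dense_coding_capacity \<Omega>AB TT \<phi>)"

end

theory Submission
  imports Defs
begin

text \<open>A product state a \<otimes> b stays a product state (T a) \<otimes> b under a local transformation,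
  and Bob's part b turns every joint effect E into an effect on A, conditioned on b; the
  conditioned effects of a joint measurement form a measurement on A.  So for each product
  component of the initial state the dense coding protocol is an ordinary classical protocol
  on A.  Since the minimal tensor product contains only mixtures of product states and mutual
  information is convex in the channel for a fixed input distribution, the dense coding rate
  is at most an average of classical rates.\<close>

definition relent_term :: "real \<Rightarrow> real \<Rightarrow> real" where
  "relent_term a b = (if a = 0 then 0 else a * ln (a / b))"

lemma relent_term_ge_tangent:
  assumes "0 \<le> a" "0 \<le> b" "a \<noteq> 0 \<longrightarrow> b \<noteq> 0" "0 < s" "0 < t"
  shows "a * ln (s / t) + a - b * s / t \<le> relent_term a b"
proof (cases "a = 0")
  case True
  then show ?thesis using assms by (simp add: relent_term_def)
next
  case False
  with assms have a: "0 < a" and b: "0 < b" by auto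
  have z: "0 < (b * s) / (a * t)" using a b assms by simp
  have "a * ln ((b * s) / (a * t)) \<le> a * ((b * s) / (a * t) - 1)"
    using ln_le_minus_one[OF z] a by (simp add: mult_left_mono)
  also have "\<dots> = b * s / t - a" using a assms by (simp add: field_simps)
  finally have "a * ln ((b * s) / (a * t)) \<le> b * s / t - a" .
  moreover have "ln ((b * s) / (a * t)) = ln (s / t) - ln (a / b)"
    using a b assms by (simp add: ln_div ln_mult)
  ultimately show ?thesis using False by (simp add: relent_term_def right_diff_distrib)
qed

lemma log_sum_inequality:
  fixes A B :: "'k \<Rightarrow> real"
  assumes "finite K" "\<forall>k\<in>K. 0 \<le> A k \<and> 0 \<le> B k \<and> (A k \<noteq> 0 \<longrightarrow> B k \<noteq> 0)"
  shows "relent_term (sum A K) (sum B K) \<le> (\<Sum>k\<in>K. relent_term (A k) (B k))"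
proof (cases "sum A K = 0")
  case True
  then have "\<forall>k\<in>K. A k = 0" using assms sum_nonneg_eq_0_iff by blast
  then show ?thesis using True by (simp add: relent_term_def)
next
  case False
  let ?s = "sum A K" and ?t = "sum B K"
  obtain k0 where k0: "k0 \<in> K" "A k0 \<noteq> 0" using False by (meson sum.neutral)
  have "B k0 \<le> ?t" by (rule member_le_sum) (use assms k0 in auto)
  then have t: "0 < ?t" using assms k0 by force
  have s: "0 < ?s" using False assms by (simp add: order_le_neq_trans sum_nonneg)
  have "(\<Sum>k\<in>K. A k * ln (?s / ?t) + A k - B k * ?s / ?t) \<le> (\<Sum>k\<in>K. relent_term (A k) (B k))"
    by (rule sum_mono) (use assms s t relent_term_ge_tangent in auto)
  moreover have "(\<Sum>k\<in>K. B k * ?s / ?t) = ?s"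
    using t by (simp add: sum_divide_distrib[symmetric] sum_distrib_right[symmetric])
  then have "(\<Sum>k\<in>K. A k * ln (?s / ?t) + A k - B k * ?s / ?t) = ?s * ln (?s / ?t)"
    by (simp add: sum.distrib sum_subtractf sum_distrib_right)
  ultimately show ?thesis using False by (simp add: relent_term_def)
qed

lemma relent_term_scale: "0 \<le> l \<Longrightarrow> relent_term (l * a) (l * b) = l * relent_term a b"
  by (cases "l = 0") (auto simp: relent_term_def)

lemma log_sum_inequality_weighted:
  fixes a b l :: "'k \<Rightarrow> real"
  assumes "finite K" "\<forall>k\<in>K. 0 \<le> l k \<and> 0 \<le> a k \<and> 0 \<le> b k \<and> (a k \<noteq> 0 \<longrightarrow> b k \<noteq> 0)"
  shows "relent_term (\<Sum>k\<in>K. l k * a k) (\<Sum>k\<in>K. l k * b k) \<le> (\<Sum>k\<in>K. l k * relent_term (a k) (b k))"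
proof -
  have "relent_term (\<Sum>k\<in>K. l k * a k) (\<Sum>k\<in>K. l k * b k)
      \<le> (\<Sum>k\<in>K. relent_term (l k * a k) (l k * b k))"
    by (rule log_sum_inequality) (use assms in auto)
  also have "\<dots> = (\<Sum>k\<in>K. l k * relent_term (a k) (b k))"
    using assms by (intro sum.cong) (auto simp: relent_term_scale)
  finally show ?thesis .
qed

lemma mutual_info_eq_relent_terms:
  "mutual_info X Y p q =
     (\<Sum>x\<in>X. \<Sum>y\<in>Y. relent_term (p x * q x y) (p x * (\<Sum>x'\<in>X. p x' * q x' y)) / ln 2)"
  unfolding mutual_info_def by (intro sum.cong refl) (auto simp: relent_term_def log_def)

lemma mutual_info_cong:
  assumes "\<forall>x\<in>X. \<forall>y\<in>Y. q x y = q' x y"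
  shows "mutual_info X Y p q = mutual_info X Y p q'"
  unfolding mutual_info_def using assms by (intro sum.cong refl) auto

lemma mutual_info_convex_channel:
  fixes W :: "'k \<Rightarrow> nat \<Rightarrow> nat \<Rightarrow> real"
  assumes "finite X" "finite K" "\<forall>x\<in>X. 0 \<le> p x" "\<forall>k\<in>K. 0 \<le> l k"
    and "\<forall>k\<in>K. \<forall>x\<in>X. \<forall>y\<in>Y. 0 \<le> W k x y"
  shows "mutual_info X Y p (\<lambda>x y. \<Sum>k\<in>K. l k * W k x y) \<le> (\<Sum>k\<in>K. l k * mutual_info X Y p (W k))"
proof -
  let ?out = "\<lambda>k y. \<Sum>x'\<in>X. p x' * W k x' y"
  have term_le: "relent_term (\<Sum>k\<in>K. l k * (p x * W k x y)) (\<Sum>k\<in>K. l k * (p x * ?out k y))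
      \<le> (\<Sum>k\<in>K. l k * relent_term (p x * W k x y) (p x * ?out k y))"
    if x: "x \<in> X" and y: "y \<in> Y" for x y
  proof (rule log_sum_inequality_weighted[OF \<open>finite K\<close>], intro ballI conjI impI)
    fix k assume k: "k \<in> K"
    have px: "0 \<le> p x" and pW: "0 \<le> p x * W k x y" using assms k x y by auto
    have le: "p x * W k x y \<le> ?out k y"
      by (rule member_le_sum[where f = "\<lambda>x'. p x' * W k x' y", OF x]) (use assms k y in auto)
    show "0 \<le> l k" using assms k by blast
    show "0 \<le> p x * W k x y" by (fact pW)
    show "0 \<le> p x * ?out k y" using px pW le by simp
    show "p x * ?out k y \<noteq> 0" if "p x * W k x y \<noteq> 0"
    proof -
      have "0 < ?out k y" using that pW le by linarith
      moreover have "p x \<noteq> 0" using that by auto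
      ultimately show ?thesis by simp
    qed
  qed
  have mix_in: "p x * (\<Sum>k\<in>K. l k * W k x y) = (\<Sum>k\<in>K. l k * (p x * W k x y))" for x y
    by (simp add: sum_distrib_left mult.left_commute)
  have mix_out: "p x * (\<Sum>x'\<in>X. p x' * (\<Sum>k\<in>K. l k * W k x' y)) = (\<Sum>k\<in>K. l k * (p x * ?out k y))"
    for x y by (simp add: sum_distrib_left mult.left_commute sum.swap[of _ X K])
  have "mutual_info X Y p (\<lambda>x y. \<Sum>k\<in>K. l k * W k x y)
      \<le> (\<Sum>x\<in>X. \<Sum>y\<in>Y. (\<Sum>k\<in>K. l k * relent_term (p x * W k x y) (p x * ?out k y)) / ln 2)"
    unfolding mutual_info_eq_relent_terms mix_out unfolding mix_in
    by (intro sum_mono divide_right_mono term_le) auto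
  also have "\<dots> = (\<Sum>k\<in>K. l k * mutual_info X Y p (W k))"
    unfolding mutual_info_eq_relent_terms
    by (simp add: sum_distrib_left sum_divide_distrib sum.swap[of _ K])
  finally show ?thesis .
qed

lemma ereal_convex_combination_le:
  fixes u f :: "'k \<Rightarrow> real"
  assumes "finite K" "\<forall>k\<in>K. 0 \<le> u k" "sum u K = 1" "\<And>k. k \<in> K \<Longrightarrow> ereal (f k) \<le> c"
  shows "ereal (\<Sum>k\<in>K. u k * f k) \<le> c"
proof (cases c)
  case (real r)
  have "(\<Sum>k\<in>K. u k * f k) \<le> (\<Sum>k\<in>K. u k * r)"
    by (rule sum_mono) (use assms real in \<open>auto intro: mult_left_mono\<close>)
  also have "\<dots> = r" using assms(3) by (simp add: sum_distrib_right[symmetric])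
  finally show ?thesis using real by simp
next
  case MInf
  obtain k where "k \<in> K" using assms(3) by fastforce
  then show ?thesis using assms(4) MInf by auto
qed simp

definition cond_effect :: "real^'b^'a \<Rightarrow> real^'b \<Rightarrow> real^'a" where
  "cond_effect E b = (\<chi> i. E $ i \<bullet> b)"

lemma inner_tens_cond_effect: "E \<bullet> tens a b = cond_effect E b \<bullet> a"
  by (simp add: inner_vec_def tens_def cond_effect_def sum_distrib_left algebra_simps)

lemma cond_effect_tens: "cond_effect (tens v w) b = (w \<bullet> b) *\<^sub>R v"
  by (simp add: cond_effect_def tens_def vec_eq_iff inner_vec_def sum_distrib_left algebra_simps)

lemma cond_effect_sum: "cond_effect (sum E Y) b = (\<Sum>y\<in>Y. cond_effect (E y) b)"
  by (simp add: cond_effect_def vec_eq_iff sum_component inner_sum_left)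

lemma inner_unit_eff: "unit_eff \<bullet> v = v $ None"
proof -
  have "unit_eff \<bullet> v = (\<Sum>i\<in>UNIV. if i = None then v $ i else 0)"
    unfolding inner_vec_def by (intro sum.cong) (auto simp: unit_eff_def)
  then show ?thesis by simp
qed

lemma is_measurement_cond_effect:
  assumes E: "is_measurement \<Omega>AB (tens unit_eff unit_eff) Y E"
    and prod: "\<forall>a\<in>\<Omega>A. tens a b \<in> \<Omega>AB" and b: "unit_eff \<bullet> b = 1"
  shows "is_measurement \<Omega>A unit_eff Y (\<lambda>y. cond_effect (E y) b)"
proof -
  have "cond_effect (E y) b \<in> effects \<Omega>A" if "y \<in> Y" for y
    using E prod that by (auto simp: is_measurement_def effects_def inner_tens_cond_effect[symmetric])
  moreover have "(\<Sum>y\<in>Y. cond_effect (E y) b) = unit_eff"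
    using E b by (simp add: is_measurement_def cond_effect_sum[symmetric] cond_effect_tens)
  ultimately show ?thesis using E by (simp add: is_measurement_def)
qed

lemma min_tensor_explicit:
  fixes \<phi> :: "real^'b^'a"
  assumes "\<phi> \<in> min_tensor \<Omega>A \<Omega>B"
  obtains K :: "(real^'b^'a) set" and u a b
  where "finite K" "\<forall>k\<in>K. 0 \<le> u k" "sum u K = 1" "\<forall>k\<in>K. a k \<in> \<Omega>A \<and> b k \<in> \<Omega>B"
    and "\<phi> = (\<Sum>k\<in>K. u k *\<^sub>R tens (a k) (b k))"
proof -
  obtain K u where K: "finite K" "K \<subseteq> {tens a b | a b. a \<in> \<Omega>A \<and> b \<in> \<Omega>B}"
    "\<forall>k\<in>K. 0 \<le> u k" "sum u K = 1" and \<phi>: "\<phi> = (\<Sum>k\<in>K. u k *\<^sub>R k)"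
    using assms unfolding min_tensor_def convex_hull_explicit by auto
  have "\<forall>k\<in>K. \<exists>a b. k = tens a b \<and> a \<in> \<Omega>A \<and> b \<in> \<Omega>B" using K(2) by blast
  then obtain a b where ab: "\<forall>k\<in>K. k = tens (a k) (b k) \<and> a k \<in> \<Omega>A \<and> b k \<in> \<Omega>B" by metis
  have "\<phi> = (\<Sum>k\<in>K. u k *\<^sub>R tens (a k) (b k))"
    unfolding \<phi> using ab by (intro sum.cong) auto
  moreover have "\<forall>k\<in>K. a k \<in> \<Omega>A \<and> b k \<in> \<Omega>B" using ab by blast
  ultimately show ?thesis using that K(1,3,4) by blast
qed

lemma loc_apply_tens:
  assumes "linear T"
  shows "loc_apply T (tens a b) = tens (T a) b"
proof -
  have column: "(\<chi> k. tens a b $ k $ j) = b $ j *\<^sub>R a" for j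
    by (simp add: vec_eq_iff tens_def mult.commute)
  show ?thesis
    unfolding loc_apply_def column by (simp add: tens_def vec_eq_iff linear_scale[OF assms] mult.commute)
qed

lemma linear_loc_apply:
  assumes "linear T"
  shows "linear (loc_apply T)"
proof (rule linearI)
  fix x y :: "real^'b^'a" and c :: real
  have add: "(\<chi> k. (x + y) $ k $ j) = (\<chi> k. x $ k $ j) + (\<chi> k. y $ k $ j)" for j
    by (simp add: vec_eq_iff)
  show "loc_apply T (x + y) = loc_apply T x + loc_apply T y"
    unfolding loc_apply_def add by (simp add: vec_eq_iff linear_add[OF assms])
  have scale: "(\<chi> k. (c *\<^sub>R x) $ k $ j) = c *\<^sub>R (\<chi> k. x $ k $ j)" for j
    by (simp add: vec_eq_iff)
  show "loc_apply T (c *\<^sub>R x) = c *\<^sub>R loc_apply T x"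
    unfolding loc_apply_def scale by (simp add: vec_eq_iff linear_scale[OF assms])
qed

lemma loc_apply_product_mixture:
  assumes "linear T"
  shows "loc_apply T (\<Sum>k\<in>K. u k *\<^sub>R tens (a k) (b k)) = (\<Sum>k\<in>K. u k *\<^sub>R tens (T (a k)) (b k))"
  by (simp add: linear_sum[OF linear_loc_apply[OF assms]] o_def
      linear_scale[OF linear_loc_apply[OF assms]] loc_apply_tens[OF assms])

lemma mutual_info_le_classical_capacity:
  assumes "is_distribution X p" "\<forall>x\<in>X. \<omega> x \<in> \<Omega>" "is_measurement \<Omega> unit_eff Y e"
  shows "ereal (mutual_info X Y p (\<lambda>x y. e y \<bullet> \<omega> x)) \<le> classical_capacity \<Omega>"
  unfolding classical_capacity_def by (rule Sup_upper) (use assms in blast)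

lemma dense_coding_mutual_info_le_classical_capacity:
  fixes \<Omega>A :: "(real^('a::finite option)) set" and \<Omega>B :: "(real^('b::finite option)) set"
  assumes \<phi>: "\<phi> \<in> min_tensor \<Omega>A \<Omega>B" and normalized: "\<forall>b\<in>\<Omega>B. unit_eff \<bullet> b = 1"
    and p: "is_distribution X p" and T: "\<forall>x\<in>X. linear (T x) \<and> T x ` \<Omega>A \<subseteq> \<Omega>A"
    and E: "is_measurement (min_tensor \<Omega>A \<Omega>B) (tens unit_eff unit_eff) Y E"
  shows "ereal (mutual_info X Y p (\<lambda>x y. E y \<bullet> loc_apply (T x) \<phi>)) \<le> classical_capacity \<Omega>A"
proof -
  obtain K :: "(real^('b option)^('a option)) set" and u a b where K: "finite K" "\<forall>k\<in>K. 0 \<le> u k" "sum u K = 1"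
    and ab: "\<forall>k\<in>K. a k \<in> \<Omega>A \<and> b k \<in> \<Omega>B" and \<phi>_eq: "\<phi> = (\<Sum>k\<in>K. u k *\<^sub>R tens (a k) (b k))"
    by (rule min_tensor_explicit[OF \<phi>])
  have prod: "tens a' b' \<in> min_tensor \<Omega>A \<Omega>B" if "a' \<in> \<Omega>A" "b' \<in> \<Omega>B" for a' b'
    unfolding min_tensor_def by (rule hull_inc) (use that in blast)
  define W where "W k x y = cond_effect (E y) (b k) \<bullet> T x (a k)" for k x y
  have stat: "E y \<bullet> loc_apply (T x) \<phi> = (\<Sum>k\<in>K. u k * W k x y)" if "x \<in> X" for x y
    using T that unfolding \<phi>_eq W_def
    by (simp add: loc_apply_product_mixture inner_sum_right inner_tens_cond_effect)
  have W_nonneg: "0 \<le> W k x y" if "k \<in> K" "x \<in> X" "y \<in> Y" for k x y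
  proof -
    have "tens (T x (a k)) (b k) \<in> min_tensor \<Omega>A \<Omega>B" using T ab prod that by blast
    then show ?thesis
      using E that unfolding W_def inner_tens_cond_effect[symmetric]
      by (auto simp: is_measurement_def effects_def)
  qed
  have capacity: "ereal (mutual_info X Y p (W k)) \<le> classical_capacity \<Omega>A" if "k \<in> K" for k
    unfolding W_def using ab T that
    by (intro mutual_info_le_classical_capacity p is_measurement_cond_effect[OF E])
      (auto intro: prod normalized[rule_format])
  have "mutual_info X Y p (\<lambda>x y. E y \<bullet> loc_apply (T x) \<phi>)
      = mutual_info X Y p (\<lambda>x y. \<Sum>k\<in>K. u k * W k x y)"
    by (rule mutual_info_cong) (use stat in auto)
  also have "\<dots> \<le> (\<Sum>k\<in>K. u k * mutual_info X Y p (W k))"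
    by (rule mutual_info_convex_channel) (use p K W_nonneg in \<open>auto simp: is_distribution_def\<close>)
  finally show ?thesis
    using ereal_convex_combination_le[OF K capacity] by (meson ereal_less_eq(3) order_trans)
qed

theorem proposition4:
  fixes RA :: "(real^'a) set" and RB :: "(real^'b) set"
    and \<Omega>AB :: "(real^('b option)^('a option)) set"
    and TT :: "(real^('a option) \<Rightarrow> real^('a option)) set"
  assumes "compact RA" "convex RA" "compact RB" "convex RB"
    and "\<Omega>AB = min_tensor (gpt_state_space RA) (gpt_state_space RB)"
    and "TT \<subseteq> allowed_local (gpt_state_space RA) \<Omega>AB"
  shows "dense_coding_capacity_space \<Omega>AB TT \<le> classical_capacity (gpt_state_space RA)"
proof -
  have normalized: "\<forall>b\<in>gpt_state_space RB. unit_eff \<bullet> b = 1"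
    by (simp add: gpt_state_space_def inner_unit_eff)
  have local: "\<forall>T\<in>TT. linear T \<and> T ` gpt_state_space RA \<subseteq> gpt_state_space RA"
    using assms(6) by (auto simp: allowed_local_def)
  show ?thesis
    unfolding dense_coding_capacity_space_def dense_coding_capacity_def
    by (intro SUP_least Sup_least)
      (use assms(5) local in \<open>auto intro!: dense_coding_mutual_info_le_classical_capacity[OF _ normalized]\<close>)
qed

end
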